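(* Let $k\geq2$ and let $L=(l_1,\dots,l_k)$ be positive integers with sum $n$ which are generic and reduced, and let $(f_0,\dots,f_{k-1})$ be the $f$-vector of $Tonn^{n,k}(L)$ ($f_{m-1}$ = number of $(m-1)$-dimensional simplices). Then for $1\leq m\leq k$, $$f_{m-1}=n\,\frac{P(k,m)}{m}=n\,\frac{m!}{m}\,S(k,m),$$ where $P(k,m)$ is the number of ordered partitions $I_1\sqcup\dots\sqcup I_m=[k]$ into $m$ nonempty blocks and $S(k,m)$ is the Stirling number of the second kind.
   Context: $L=(l_1,\dots,l_k)$ is generic if for all subsets $I,J\subseteq[k]$, $\sum_{i\in I}l_i=\sum_{j\in J}l_j$ implies $I=J$. $L$ is reduced if $\gcd(l_1,\dots,l_k)=1$. The generalized tonnetz $Tonn^{n,k}(L)$ is the simplicial complex on vertex set $\mathbb{Z}_n$ whose maximal simplices are the sets $\Delta(x;\sigma)=\{x,\,x+l_{\sigma(1)},\dots,x+l_{\sigma(1)}+\dots+l_{\sigma(k-1)}\}$ (sums in $\mathbb{Z}_n$), for $x\in\mathbb{Z}_n$ and $\sigma\in S_k$; its simplices are all subsets of these sets. *)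

theory Defs
  imports "HOL-Combinatorics.Combinatorics"
begin

(* L = (l_1,...,l_k) is represented as a list with L ! i = l_{i+1}; indices i < length L. *)

definition generic :: "nat list \<Rightarrow> bool" where
  "generic L \<longleftrightarrow> (\<forall>I J. I \<subseteq> {..<length L} \<longrightarrow> J \<subseteq> {..<length L} \<longrightarrow>
      (\<Sum>i\<in>I. L ! i) = (\<Sum>j\<in>J. L ! j) \<longrightarrow> I = J)"

definition reduced :: "nat list \<Rightarrow> bool" where
  "reduced L \<longleftrightarrow> Gcd (set L) = 1"

(* Delta(x;sigma) = {x, x + l_sigma(1), ..., x + l_sigma(1) + ... + l_sigma(k-1)} in Z_n,
   with Z_n represented by {0..<n} and arithmetic mod n; sigma a permutation of {..<k}. *)
definition tonnetz_max_simplex :: "nat \<Rightarrow> nat list \<Rightarrow> nat \<Rightarrow> (nat \<Rightarrow> nat) \<Rightarrow> nat set" where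
  "tonnetz_max_simplex n L x \<sigma> =
     {(x + (\<Sum>j<i. L ! (\<sigma> j))) mod n | i. i < length L}"

definition tonnetz :: "nat \<Rightarrow> nat list \<Rightarrow> nat set set" where
  "tonnetz n L = {S. S \<noteq> {} \<and> (\<exists>x \<in> {..<n}. \<exists>\<sigma>. \<sigma> permutes {..<length L} \<and>
                                S \<subseteq> tonnetz_max_simplex n L x \<sigma>)}"

definition fvec :: "nat set set \<Rightarrow> nat \<Rightarrow> nat" where
  "fvec K d = card {S \<in> K. card S = d + 1}"

definition ordered_partitions :: "nat \<Rightarrow> nat \<Rightarrow> nat" where
  "ordered_partitions k m = card {Is :: nat set list. length Is = m \<and>
      (\<forall>i<m. Is ! i \<noteq> {}) \<and>
      (\<forall>i<m. \<forall>j<m. i \<noteq> j \<longrightarrow> Is ! i \<inter> Is ! j = {}) \<and>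
      \<Union>(set Is) = {1..k}}"

end

theory Submission
  imports Defs "HOL-Number_Theory.Cong"
begin

text \<open>Write \<open>w(U) = \<Sum>i\<in>U. l\<^sub>i\<close>. A maximal simplex consists of the points \<open>x + w(U)\<close>
  for a complete flag of subsets \<open>U\<close> of \<open>[k]\<close>, so an \<open>m\<close>-element simplex is \<open>{y + w(U) | U \<in> C}\<close>
  for a base vertex \<open>y\<close> and a chain \<open>C\<close> of \<open>m\<close> proper subsets starting at the empty set. Such chains
  are the surjections \<open>[k] \<rightarrow> {0..m-1}\<close> (level sets of a weak order), counted by
  \<open>m! S(k,m) = P(k,m)\<close>. Genericity makes the weights of proper subsets distinct residues
  modulo \<open>n\<close>, so a simplex together with its base vertex determines the chain, and re-basing
  at any of the \<open>m\<close> vertices rotates the chain cyclically. Hence the \<open>n P(k,m)\<close> pairs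
  (vertex, chain) cover every \<open>m\<close>-element simplex exactly \<open>m\<close> times.\<close>

definition surjections :: "'a set \<Rightarrow> 'b set \<Rightarrow> ('a \<Rightarrow> 'b) set" where
  "surjections A B = {f \<in> A \<rightarrow>\<^sub>E B. f ` A = B}"

lemma finite_surjections: "finite A \<Longrightarrow> finite B \<Longrightarrow> finite (surjections A B)"
  unfolding surjections_def by (rule finite_subset[of _ "A \<rightarrow>\<^sub>E B"]) (auto intro: finite_PiE)

lemma surjections_empty: "surjections {} B = (if B = {} then {\<lambda>_. undefined} else {})"
  unfolding surjections_def by auto

lemma bij_betw_surjections_insert:
  assumes "a \<notin> A"
  shows "bij_betw (\<lambda>f. (f a, restrict f A)) (surjections (insert a A) B)
           (SIGMA b:B. {g \<in> A \<rightarrow>\<^sub>E B. insert b (g ` A) = B})"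
proof (rule bij_betw_byWitness[where f' = "\<lambda>(b, g). g(a := b)"])
  show "\<forall>f \<in> surjections (insert a A) B. (case (f a, restrict f A) of (b, g) \<Rightarrow> g(a := b)) = f"
    unfolding surjections_def by (auto simp: fun_eq_iff PiE_iff extensional_def)
  show "\<forall>p \<in> (SIGMA b:B. {g \<in> A \<rightarrow>\<^sub>E B. insert b (g ` A) = B}).
          (\<lambda>f. (f a, restrict f A)) (case p of (b, g) \<Rightarrow> g(a := b)) = p"
    using assms by (auto simp: fun_eq_iff PiE_iff extensional_def)
  show "(\<lambda>f. (f a, restrict f A)) ` surjections (insert a A) B
          \<subseteq> (SIGMA b:B. {g \<in> A \<rightarrow>\<^sub>E B. insert b (g ` A) = B})"
    unfolding surjections_def by auto
  have "g(a := b) ` insert a A = insert b (g ` A)" for g :: "'a \<Rightarrow> 'b" and b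
    using assms by auto
  then show "(\<lambda>(b, g). g(a := b)) ` (SIGMA b:B. {g \<in> A \<rightarrow>\<^sub>E B. insert b (g ` A) = B})
          \<subseteq> surjections (insert a A) B"
    using assms unfolding surjections_def by (auto simp: PiE_iff extensional_def)
qed

lemma extensions_eq_surjections_Un:
  assumes "b \<in> B"
  shows "{g \<in> A \<rightarrow>\<^sub>E B. insert b (g ` A) = B} = surjections A B \<union> surjections A (B - {b})"
  using assms unfolding surjections_def by (auto simp: PiE_iff)

lemma card_surjections_insert:
  assumes "finite A" "finite B" "a \<notin> A"
  shows "card (surjections (insert a A) B)
           = card B * card (surjections A B) + (\<Sum>b\<in>B. card (surjections A (B - {b})))"
proof -
  have "card (surjections (insert a A) B)
          = card (SIGMA b:B. {g \<in> A \<rightarrow>\<^sub>E B. insert b (g ` A) = B})"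
    by (rule bij_betw_same_card[OF bij_betw_surjections_insert[OF assms(3)]])
  also have "\<dots> = (\<Sum>b\<in>B. card {g \<in> A \<rightarrow>\<^sub>E B. insert b (g ` A) = B})"
    using assms(1,2) by (simp add: finite_PiE)
  also have "\<dots> = (\<Sum>b\<in>B. card (surjections A B) + card (surjections A (B - {b})))"
  proof (rule sum.cong)
    fix b assume "b \<in> B"
    moreover have "surjections A B \<inter> surjections A (B - {b}) = {}"
      using \<open>b \<in> B\<close> unfolding surjections_def by auto
    ultimately show "card {g \<in> A \<rightarrow>\<^sub>E B. insert b (g ` A) = B}
                       = card (surjections A B) + card (surjections A (B - {b}))"
      using assms by (simp add: extensions_eq_surjections_Un card_Un_disjoint finite_surjections)
  qed simp
  finally show ?thesis by (simp add: sum.distrib)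
qed

theorem card_surjections:
  "finite A \<Longrightarrow> finite B \<Longrightarrow> card (surjections A B) = fact (card B) * Stirling (card A) (card B)"
proof (induction A arbitrary: B rule: finite_induct)
  case empty
  then show ?case by (cases "card B") (auto simp: surjections_empty)
next
  case (insert a A)
  have IH: "card (surjections A (B - {b})) = fact (card B - 1) * Stirling (card A) (card B - 1)"
    if "b \<in> B" for b
    using insert that by simp
  show ?case
  proof (cases "card B")
    case 0
    then show ?thesis using insert by (simp add: card_surjections_insert)
  next
    case (Suc p)
    then have "card (surjections (insert a A) B)
                 = Suc p * (fact (Suc p) * Stirling (card A) (Suc p)) + Suc p * (fact p * Stirling (card A) p)"
      using insert IH by (simp add: card_surjections_insert)
    also have "\<dots> = fact (Suc p) * Stirling (Suc (card A)) (Suc p)"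
      by (simp add: algebra_simps)
    finally show ?thesis using insert Suc by simp
  qed
qed

lemma bij_betw_surjections_ordered_partitions:
  "bij_betw (\<lambda>f. map (\<lambda>i. {a \<in> A. f a = i}) [0..<m]) (surjections A {..<m})
     {Is. length Is = m \<and> (\<forall>i<m. Is ! i \<noteq> {}) \<and>
          (\<forall>i<m. \<forall>j<m. i \<noteq> j \<longrightarrow> Is ! i \<inter> Is ! j = {}) \<and> \<Union>(set Is) = A}"
  (is "bij_betw ?blocks _ ?P")
proof (rule bij_betw_imageI)
  show "inj_on ?blocks (surjections A {..<m})"
  proof (rule inj_onI)
    fix f g assume f: "f \<in> surjections A {..<m}" and g: "g \<in> surjections A {..<m}"
      and eq: "?blocks f = ?blocks g"
    have "f a = g a" if "a \<in> A" for a
    proof -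
      have "f a < m" using f that unfolding surjections_def by auto
      then have "a \<in> ?blocks g ! f a" using that by (simp add: eq[symmetric])
      then show ?thesis using \<open>f a < m\<close> by simp
    qed
    then show "f = g"
      using f g unfolding surjections_def by (intro extensionalityI[of f A g]) (auto simp: PiE_iff)
  qed
  show "?blocks ` surjections A {..<m} = ?P"
  proof (intro equalityI subsetI)
    fix Is assume "Is \<in> ?blocks ` surjections A {..<m}"
    then obtain f where f: "f \<in> A \<rightarrow>\<^sub>E {..<m}" "f ` A = {..<m}" and Is: "Is = ?blocks f"
      unfolding surjections_def by auto
    have "\<Union>(set Is) = {a \<in> A. f a < m}"
      unfolding Is by auto
    then show "Is \<in> ?P" using f unfolding Is by (auto simp: PiE_iff) (metis imageE lessThan_iff)
  next
    fix Is assume Is: "Is \<in> ?P"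
    have block_unique: "\<exists>!i. i < m \<and> a \<in> Is ! i" if "a \<in> A" for a
    proof -
      obtain i where "i < m" "a \<in> Is ! i"
        using Is \<open>a \<in> A\<close> by (auto simp: in_set_conv_nth)
      then show ?thesis using Is by blast
    qed
    define f where "f = (\<lambda>a\<in>A. THE i. i < m \<and> a \<in> Is ! i)"
    have f_iff: "f a = i \<longleftrightarrow> a \<in> Is ! i" if "a \<in> A" "i < m" for a i
      using theI'[OF block_unique[OF \<open>a \<in> A\<close>]] block_unique[OF \<open>a \<in> A\<close>] that
      unfolding f_def by auto
    have f_less: "f a < m" if "a \<in> A" for a
      using theI'[OF block_unique[OF that]] that unfolding f_def by simp
    have blocks_sub: "Is ! i \<subseteq> A" if "i < m" for i
      using Is that nth_mem[of i Is] by blast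
    have "f ` A = {..<m}"
    proof (intro equalityI subsetI)
      fix i assume "i \<in> {..<m}"
      then obtain a where "a \<in> Is ! i" using Is by blast
      then show "i \<in> f ` A" using f_iff blocks_sub \<open>i \<in> {..<m}\<close> by blast
    qed (use f_less in auto)
    then have "f \<in> surjections A {..<m}"
      using f_less unfolding surjections_def f_def by auto
    moreover have "?blocks f = Is"
    proof (rule nth_equalityI)
      show "length (?blocks f) = length Is" using Is by simp
      fix i assume "i < length (?blocks f)"
      then have "i < m" by simp
      then show "?blocks f ! i = Is ! i" using f_iff blocks_sub[OF \<open>i < m\<close>] by auto
    qed
    ultimately show "Is \<in> ?blocks ` surjections A {..<m}" by blast
  qed
qed

lemma ordered_partitions_eq_Stirling: "ordered_partitions k m = fact m * Stirling k m"
proof -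
  have "ordered_partitions k m = card (surjections {1..k} {..<m})"
    unfolding ordered_partitions_def
    by (rule bij_betw_same_card[OF bij_betw_surjections_ordered_partitions, symmetric])
  then show ?thesis by (simp add: card_surjections)
qed

lemma filter_less_eq_take_if_sorted:
  "sorted (map g xs) \<Longrightarrow> filter (\<lambda>a. g a < t) xs = take (length (filter (\<lambda>a. g a < t) xs)) xs"
proof (induction xs)
  case (Cons x xs)
  show ?case
  proof (cases "g x < t")
    case True
    then show ?thesis using Cons by simp
  next
    case False
    then have "filter (\<lambda>a. g a < t) (x # xs) = []"
      using Cons.prems by (fastforce simp: filter_empty_conv)
    then show ?thesis by simp
  qed
qed simp

lemma sorting_permutation_exists:
  fixes g :: "nat \<Rightarrow> 'b::linorder"
  obtains \<sigma> where "\<sigma> permutes {..<k}"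
    and "\<And>t. \<sigma> ` {..<card {a. a < k \<and> g a < t}} = {a. a < k \<and> g a < t}"
proof
  define xs where "xs = sort_key g [0..<k]"
  have xs: "distinct xs" "set xs = {..<k}" "length xs = k" "sorted (map g xs)"
    unfolding xs_def by auto
  define \<sigma> where "\<sigma> i = (if i < k then xs ! i else i)" for i
  have "bij_betw ((!) xs) {..<k} {..<k}"
    by (rule bij_betw_nth) (use xs in auto)
  then have "bij_betw \<sigma> {..<k} {..<k}"
    by (rule bij_betw_cong[THEN iffD1, rotated]) (simp add: \<sigma>_def)
  then show "\<sigma> permutes {..<k}"
    by (rule bij_imp_permutes) (simp add: \<sigma>_def)
  fix t
  let ?ys = "filter (\<lambda>a. g a < t) xs"
  have set_ys: "set ?ys = {a. a < k \<and> g a < t}"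
    using xs by auto
  have len_ys: "length ?ys = card {a. a < k \<and> g a < t}"
    using distinct_card[of ?ys] set_ys xs by simp
  have len_le: "length ?ys \<le> k"
    using length_filter_le[of _ xs] xs by simp
  have "\<sigma> ` {..<length ?ys} = (!) xs ` {0..<length ?ys}"
    using len_le by (auto simp: \<sigma>_def)
  also have "\<dots> = set (take (length ?ys) xs)"
    using len_le xs by (simp add: nth_image)
  also have "\<dots> = set ?ys"
    by (rule arg_cong[where f = set, OF filter_less_eq_take_if_sorted[OF xs(4), symmetric]])
  finally show "\<sigma> ` {..<card {a. a < k \<and> g a < t}} = {a. a < k \<and> g a < t}"
    using set_ys len_ys by simp
qed

lemma level_function_exists:
  fixes e :: "nat \<Rightarrow> nat"
  assumes e_mono: "\<And>s t. s < t \<Longrightarrow> t < m \<Longrightarrow> e s < e t" and "0 < m"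
  obtains g where "\<And>q. g q < m" and "\<And>t. t < m \<Longrightarrow> g (e t) = t"
    and "\<And>t. t < m \<Longrightarrow> {q. g q < t} = {e 0..<e t}"
proof
  define below where "below q = {t. t < m \<and> e t \<le> q}" for q
  have e_le_iff: "e s \<le> e t \<longleftrightarrow> s \<le> t" if "s < m" "t < m" for s t
    using e_mono[of s t] e_mono[of t s] that by (cases s t rule: linorder_cases) auto
  have below_e: "below (e t) = {..t}" if "t < m" for t
    using e_le_iff that unfolding below_def by auto
  have card_below: "card (below q) \<le> m" for q
    unfolding below_def by (rule card_mono[of "{..<m}", simplified]) auto
  define g where "g q = (if q < e 0 then m - 1 else card (below q) - 1)" for q
  show "g q < m" for q
    using card_below[of q] \<open>0 < m\<close> unfolding g_def by auto
  show "g (e t) = t" if "t < m" for t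
    using below_e[OF that] e_le_iff[of 0 t] that \<open>0 < m\<close> unfolding g_def by auto
  show "{q. g q < t} = {e 0..<e t}" if "t < m" for t
  proof (intro equalityI subsetI)
    fix q assume "q \<in> {q. g q < t}"
    then have "g q < t" by simp
    then have "e 0 \<le> q"
      using that unfolding g_def by (cases "q < e 0") auto
    moreover have "q < e t"
    proof (rule ccontr)
      assume "\<not> q < e t"
      have "e s \<le> q" if "s \<le> t" for s
        using e_le_iff[of s t] that \<open>t < m\<close> \<open>\<not> q < e t\<close> by simp
      then have "{..t} \<subseteq> below q"
        using \<open>t < m\<close> unfolding below_def by auto
      then have "Suc t \<le> card (below q)"
        using card_mono[of "below q" "{..t}"] unfolding below_def by auto
      then show False
        using \<open>g q < t\<close> \<open>e 0 \<le> q\<close> unfolding g_def by auto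
    qed
    ultimately show "q \<in> {e 0..<e t}" by simp
  next
    fix q assume q: "q \<in> {e 0..<e t}"
    then have "t \<noteq> 0" by (cases "t = 0") auto
    have "s < t" if "s < m" "e s \<le> q" for s
      using e_le_iff[of t s] that q \<open>t < m\<close> by auto
    then have "below q \<subseteq> {..<t}"
      unfolding below_def by auto
    then have "card (below q) \<le> t"
      using card_mono[of "{..<t}" "below q"] by simp
    then show "q \<in> {q. g q < t}"
      using q \<open>t \<noteq> 0\<close> unfolding g_def by auto
  qed
qed

lemma card_eq_mult_card_image:
  assumes "finite A" and "\<And>x. x \<in> A \<Longrightarrow> card {y \<in> A. g y = g x} = c"
  shows "card A = c * card (g ` A)"
proof -
  have "card A = card (\<Union>b\<in>g ` A. {x \<in> A. g x = b})"
    by (rule arg_cong[where f = card]) auto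
  also have "\<dots> = (\<Sum>b\<in>g ` A. card {x \<in> A. g x = b})"
    using assms(1) by (intro card_UN_disjoint) auto
  also have "\<dots> = (\<Sum>b\<in>g ` A. c)"
    using assms(2) by (intro sum.cong) auto
  finally show ?thesis by simp
qed

lemma image_lessThan_psubset_if_permutes:
  fixes \<sigma> :: "nat \<Rightarrow> nat"
  assumes "\<sigma> permutes {..<k}" and "i < k"
  shows "\<sigma> ` {..<i} \<subset> {..<k}"
proof -
  have "\<sigma> ` {..<i} \<subseteq> \<sigma> ` {..<k}"
    using assms(2) by (intro image_mono) simp
  moreover have "card (\<sigma> ` {..<i}) \<noteq> card {..<k}"
    using assms(2) by (simp add: card_image permutes_inj_on[OF assms(1)])
  ultimately show ?thesis
    unfolding permutes_image[OF assms(1)] by (intro psubsetI) auto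
qed

lemma add_mod_cancel_less:
  fixes a b y n :: nat
  assumes "(y + a) mod n = (y + b) mod n" "a < n" "b < n"
  shows "a = b"
  using assms cong_less_modulus_unique_nat cong_add_lcancel_nat unfolding cong_def by blast

locale generic_tonnetz =
  fixes L :: "nat list" and k n m :: nat
  assumes length_L: "length L = k" and L_pos: "\<forall>l \<in> set L. 0 < l" and sum_L: "sum_list L = n"
    and generic_L: "generic L" and m_pos: "0 < m" and m_le_k: "m \<le> k"
begin

definition weight :: "nat set \<Rightarrow> nat" where
  "weight U = (\<Sum>a\<in>U. L ! a)"

definition shift :: "nat \<Rightarrow> nat set \<Rightarrow> nat" where
  "shift y U = (y + weight U) mod n"

definition lower :: "(nat \<Rightarrow> nat) \<Rightarrow> nat \<Rightarrow> nat set" where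
  "lower f t = {a. a < k \<and> f a < t}"

text \<open>A surjection \<open>f\<close> onto \<open>{..<m}\<close> encodes the chain
  \<open>{} = lower f 0 \<subset> \<dots> \<subset> lower f (m - 1) \<subset> {..<k}\<close>, and \<open>face y f\<close> is the set of vertices
  reached from \<open>y\<close> along that chain.\<close>

definition face :: "nat \<Rightarrow> (nat \<Rightarrow> nat) \<Rightarrow> nat set" where
  "face y f = (\<lambda>t. shift y (lower f t)) ` {..<m}"

lemma weight_full: "weight {..<k} = n"
  using sum_L length_L by (simp add: weight_def sum_list_sum_nth atLeast0LessThan)

lemma n_pos: "0 < n"
proof -
  have "0 < k" using m_pos m_le_k by simp
  then have "0 < L ! 0" using L_pos length_L by simp
  also have "L ! 0 \<le> weight {..<k}"
    unfolding weight_def using \<open>0 < k\<close> by (intro member_le_sum) auto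
  finally show ?thesis by (simp add: weight_full)
qed

lemma weight_inj:
  "U \<subseteq> {..<k} \<Longrightarrow> V \<subseteq> {..<k} \<Longrightarrow> weight U = weight V \<Longrightarrow> U = V"
  using generic_L length_L unfolding generic_def weight_def by auto

lemma weight_less: "U \<subset> {..<k} \<Longrightarrow> weight U < n"
proof -
  assume U: "U \<subset> {..<k}"
  have "weight U \<le> weight {..<k}"
    using U unfolding weight_def by (intro sum_mono2) auto
  moreover have "weight U \<noteq> weight {..<k}"
    using U weight_inj by blast
  ultimately show ?thesis by (simp add: weight_full)
qed

lemma weight_Un:
  "U \<subseteq> {..<k} \<Longrightarrow> V \<subseteq> {..<k} \<Longrightarrow> U \<inter> V = {} \<Longrightarrow> weight (U \<union> V) = weight U + weight V"
  unfolding weight_def by (rule sum.union_disjoint) (auto intro: finite_subset)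

lemma shift_less: "shift y U < n"
  unfolding shift_def using n_pos by simp

lemma shift_empty: "y < n \<Longrightarrow> shift y {} = y"
  by (simp add: shift_def weight_def)

lemma shift_mod: "shift (y mod n) U = shift y U"
  by (simp add: shift_def mod_add_left_eq)

lemma shift_Un:
  "U \<subseteq> {..<k} \<Longrightarrow> V \<subseteq> {..<k} \<Longrightarrow> U \<inter> V = {} \<Longrightarrow> shift y (U \<union> V) = shift (shift y U) V"
  by (simp add: shift_def weight_Un mod_add_left_eq add.assoc)

lemma shift_full: "shift y {..<k} = y mod n"
  by (simp add: shift_def weight_full)

lemma inj_on_shift: "inj_on (shift y) {U. U \<subset> {..<k}}"
proof (rule inj_onI)
  fix U V assume "U \<in> {U. U \<subset> {..<k}}" "V \<in> {U. U \<subset> {..<k}}" "shift y U = shift y V"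
  then have "U \<subset> {..<k}" "V \<subset> {..<k}" "(y + weight U) mod n = (y + weight V) mod n"
    by (simp_all add: shift_def)
  then show "U = V"
    using add_mod_cancel_less weight_less weight_inj by blast
qed

lemma tonnetz_max_simplex_eq:
  assumes "\<sigma> permutes {..<k}"
  shows "tonnetz_max_simplex n L x \<sigma> = (\<lambda>i. shift x (\<sigma> ` {..<i})) ` {..<k}"
proof -
  have "(\<Sum>j<i. L ! \<sigma> j) = weight (\<sigma> ` {..<i})" for i
    unfolding weight_def by (simp add: sum.reindex permutes_inj_on[OF assms])
  then show ?thesis
    unfolding tonnetz_max_simplex_def shift_def using length_L by force
qed

lemma lower_0: "lower f 0 = {}"
  by (simp add: lower_def)

lemma lower_subset: "lower f t \<subseteq> {..<k}"
  by (auto simp: lower_def)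

context
  fixes f assumes f: "f \<in> surjections {..<k} {..<m}"
begin

lemma level_less: "a < k \<Longrightarrow> f a < m"
  using f unfolding surjections_def by auto

lemma level_attained: "t < m \<Longrightarrow> \<exists>a<k. f a = t"
proof -
  assume "t < m"
  then have "t \<in> f ` {..<k}" using f unfolding surjections_def by simp
  then show ?thesis by auto
qed

lemma lower_psubset: "t < m \<Longrightarrow> lower f t \<subset> {..<k}"
  using level_attained unfolding lower_def by fastforce

lemma lower_strict_mono: "s < t \<Longrightarrow> t < m \<Longrightarrow> lower f s \<subset> lower f t"
proof -
  assume "s < t" "t < m"
  then obtain a where "a < k" "f a = s" using level_attained[of s] by auto
  then have "a \<in> lower f t - lower f s" using \<open>s < t\<close> by (simp add: lower_def)
  then show ?thesis by (auto simp: lower_def)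
qed

lemma inj_on_lower: "inj_on (lower f) {..<m}"
proof (rule inj_onI)
  fix s t assume "s \<in> {..<m}" "t \<in> {..<m}" "lower f s = lower f t"
  then show "s = t"
    by (cases s t rule: linorder_cases) (auto dest: lower_strict_mono)
qed

lemma card_face: "card (face y f) = m"
proof -
  have "inj_on (shift y) (lower f ` {..<m})"
    using lower_psubset by (intro inj_on_subset[OF inj_on_shift]) auto
  moreover have "face y f = shift y ` lower f ` {..<m}"
    unfolding face_def by (simp add: image_image)
  ultimately show ?thesis
    by (simp add: card_image inj_on_lower)
qed

lemma mem_face: "y < n \<Longrightarrow> y \<in> face y f"
proof -
  assume "y < n"
  then have "shift y (lower f 0) = y" by (simp add: lower_0 shift_empty)
  then show ?thesis using m_pos unfolding face_def by force
qed

lemma card_lower_avoiding: "a < k \<Longrightarrow> card {U \<in> lower f ` {..<m}. a \<notin> U} = Suc (f a)"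
proof -
  assume "a < k"
  have "a \<notin> lower f t \<longleftrightarrow> t \<le> f a" for t
    using \<open>a < k\<close> by (auto simp: lower_def)
  then have "{U \<in> lower f ` {..<m}. a \<notin> U} = lower f ` {t \<in> {..<m}. t \<le> f a}"
    by blast
  also have "{t \<in> {..<m}. t \<le> f a} = {..f a}"
    using level_less[OF \<open>a < k\<close>] by auto
  finally have "{U \<in> lower f ` {..<m}. a \<notin> U} = lower f ` {..f a}" .
  moreover have "inj_on (lower f) {..f a}"
    by (rule inj_on_subset[OF inj_on_lower]) (use level_less[OF \<open>a < k\<close>] in auto)
  ultimately show ?thesis by (simp add: card_image)
qed

lemma face_in_tonnetz: "y < n \<Longrightarrow> face y f \<in> tonnetz n L"
proof -
  assume "y < n"
  obtain \<sigma> where \<sigma>: "\<sigma> permutes {..<k}"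
    and \<sigma>_lower: "\<And>t. \<sigma> ` {..<card (lower f t)} = lower f t"
    using sorting_permutation_exists[of k f] unfolding lower_def by blast
  have "face y f \<subseteq> tonnetz_max_simplex n L y \<sigma>"
    unfolding tonnetz_max_simplex_eq[OF \<sigma>]
  proof
    fix z assume "z \<in> face y f"
    then obtain t where "t < m" "z = shift y (lower f t)" unfolding face_def by auto
    moreover have "card (lower f t) < k"
      using psubset_card_mono[OF _ lower_psubset[OF \<open>t < m\<close>]] by simp
    ultimately show "z \<in> (\<lambda>i. shift y (\<sigma> ` {..<i})) ` {..<k}"
      using \<sigma>_lower by (metis image_eqI lessThan_iff)
  qed
  then show ?thesis
    unfolding tonnetz_def using \<open>y < n\<close> \<sigma> mem_face[OF \<open>y < n\<close>] length_L by blast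
qed

end

lemma face_inj:
  assumes "f \<in> surjections {..<k} {..<m}" "f' \<in> surjections {..<k} {..<m}"
    and "face y f = face y f'"
  shows "f = f'"
proof -
  have "shift y ` lower f ` {..<m} = shift y ` lower f' ` {..<m}"
    using assms(3) unfolding face_def image_image .
  moreover have "inj_on (shift y) (lower f ` {..<m} \<union> lower f' ` {..<m})"
    using lower_psubset[OF assms(1)] lower_psubset[OF assms(2)]
    by (intro inj_on_subset[OF inj_on_shift]) blast
  ultimately have "lower f ` {..<m} = lower f' ` {..<m}"
    by (simp add: inj_on_image_eq_iff)
  then have "f a = f' a" if "a < k" for a
    using card_lower_avoiding[OF assms(1) that] card_lower_avoiding[OF assms(2) that] by simp
  then show ?thesis
    using assms(1,2) unfolding surjections_def
    by (intro extensionalityI[of f "{..<k}" f']) (auto simp: PiE_iff)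
qed

lemma face_rebase:
  assumes f: "f \<in> surjections {..<k} {..<m}" and "t0 < m"
  obtains f' where "f' \<in> surjections {..<k} {..<m}"
    and "face (shift y (lower f t0)) f' = face y f"
proof
  txt \<open>Rebasing at the vertex of level \<open>t0\<close> lowers every level by \<open>t0\<close> modulo \<open>m\<close>;
    \<open>r\<close> undoes this rotation.\<close>
  define r where "r s = (if t0 + s < m then t0 + s else t0 + s - m)" for s
  define f' where "f' = (\<lambda>a\<in>{..<k}. if t0 \<le> f a then f a - t0 else f a + m - t0)"
  have r_less: "r s < m" if "s < m" for s
    using that \<open>t0 < m\<close> unfolding r_def by (cases "t0 + s < m") auto
  have inj_r: "inj_on r {..<m}"
    by (rule inj_onI) (auto simp: r_def split: if_splits)
  have r_image: "r ` {..<m} = {..<m}"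
    using r_less inj_r by (intro endo_inj_surj) auto
  have f'_less: "f' a < m" and r_f': "r (f' a) = f a" if "a < k" for a
    using level_less[OF f that] \<open>t0 < m\<close> that by (auto simp: f'_def r_def)
  show "f' \<in> surjections {..<k} {..<m}"
  proof -
    have "s \<in> f' ` {..<k}" if s: "s < m" for s
    proof -
      obtain a where "a < k" "f a = r s"
        using level_attained[OF f r_less[OF s]] by blast
      then have "f' a = s"
        using inj_onD[OF inj_r] r_f' f'_less s by auto
      then show ?thesis using \<open>a < k\<close> by auto
    qed
    then have "f' ` {..<k} = {..<m}"
      using f'_less by auto
    moreover have "f' \<in> {..<k} \<rightarrow>\<^sub>E {..<m}"
      using f'_less by (intro PiE_I) (auto simp: f'_def)
    ultimately show ?thesis
      unfolding surjections_def by blast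
  qed
  let ?z = "shift y (lower f t0)"
  have shift_lower: "shift ?z (lower f' s) = shift y (lower f (r s))" if "s < m" for s
  proof (cases "t0 + s < m")
    case True
    have "lower f (t0 + s) = lower f t0 \<union> lower f' s"
      using True by (auto simp: lower_def f'_def)
    moreover have "lower f t0 \<inter> lower f' s = {}"
      using True by (auto simp: lower_def f'_def)
    ultimately show ?thesis
      using True by (simp add: r_def shift_Un lower_subset)
  next
    case False
    let ?W = "lower f (t0 + s - m)"
    have split: "lower f' s = ({..<k} - lower f t0) \<union> ?W"
    proof (intro set_eqI)
      fix a show "a \<in> lower f' s \<longleftrightarrow> a \<in> ({..<k} - lower f t0) \<union> ?W"
        using False that \<open>t0 < m\<close> level_less[OF f, of a] by (cases "a < k") (auto simp: lower_def f'_def)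
    qed
    have "?W \<subseteq> lower f t0"
      using that by (auto simp: lower_def)
    then have "shift ?z (lower f' s) = shift (shift ?z ({..<k} - lower f t0)) ?W"
      unfolding split by (intro shift_Un) (auto simp: lower_def)
    also have "shift ?z ({..<k} - lower f t0) = shift y (lower f t0 \<union> ({..<k} - lower f t0))"
      by (rule shift_Un[symmetric]) (auto simp: lower_def)
    also have "lower f t0 \<union> ({..<k} - lower f t0) = {..<k}"
      using lower_subset by blast
    finally show ?thesis
      using False by (simp add: r_def shift_full shift_mod)
  qed
  have "face ?z f' = (\<lambda>t. shift y (lower f t)) ` r ` {..<m}"
    unfolding face_def image_image using shift_lower by (intro image_cong) auto
  then show "face ?z f' = face y f"
    unfolding r_image face_def .
qed

lemma face_of_initial_segments:
  assumes \<sigma>: "\<sigma> permutes {..<k}" and I: "I \<subseteq> {..<k}" "card I = m"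
  obtains y f where "y < n" "f \<in> surjections {..<k} {..<m}"
    and "face y f = (\<lambda>i. shift x (\<sigma> ` {..<i})) ` I"
proof -
  txt \<open>The smallest index \<open>e 0\<close> of \<open>I\<close> becomes the base vertex; the positions before it are
    reached only after wrapping around, so they go to the top level.\<close>
  define e where "e t = sorted_list_of_set I ! t" for t
  have "finite I" using I(1) finite_subset by blast
  have e_mono: "e s < e t" if "s < t" "t < m" for s t
    using sorted_wrt_nth_less[OF strict_sorted_list_of_set, of s t I] that I(2)
    by (simp add: e_def)
  have "e ` {..<m} = set (sorted_list_of_set I)"
    using I(2) by (auto simp: e_def set_conv_nth)
  then have e_image: "e ` {..<m} = I"
    using \<open>finite I\<close> by simp
  have e_less: "e t < k" if "t < m" for t
    using e_image I(1) that by blast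
  obtain g where g_less: "\<And>q. g q < m" and g_e: "\<And>t. t < m \<Longrightarrow> g (e t) = t"
    and g_lower: "\<And>t. t < m \<Longrightarrow> {q. g q < t} = {e 0..<e t}"
    using level_function_exists[of m e, OF e_mono m_pos] by blast
  define f where "f = (\<lambda>a\<in>{..<k}. g (inv \<sigma> a))"
  have f_\<sigma>: "f (\<sigma> q) = g q" if "q < k" for q
    using that permutes_inverses(2)[OF \<sigma>] permutes_in_image[OF \<sigma>] by (simp add: f_def)
  have lower_f: "lower f t = \<sigma> ` {e 0..<e t}" if "t < m" for t
  proof -
    have "lower f t = \<sigma> ` {q. q < k \<and> g q < t}"
    proof (intro equalityI subsetI)
      fix a assume "a \<in> lower f t"
      then have "a < k" "g (inv \<sigma> a) < t" by (auto simp: lower_def f_def)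
      moreover have "inv \<sigma> a < k" "\<sigma> (inv \<sigma> a) = a"
        using \<open>a < k\<close> permutes_in_image[OF permutes_inv[OF \<sigma>]] permutes_inverses(1)[OF \<sigma>]
        by auto
      ultimately show "a \<in> \<sigma> ` {q. q < k \<and> g q < t}"
        by (intro rev_image_eqI[of "inv \<sigma> a"]) auto
    next
      fix a assume "a \<in> \<sigma> ` {q. q < k \<and> g q < t}"
      then obtain q where "q < k" "g q < t" "a = \<sigma> q" by blast
      then show "a \<in> lower f t"
        using f_\<sigma> permutes_in_image[OF \<sigma>] by (simp add: lower_def)
    qed
    also have "{q. q < k \<and> g q < t} = {e 0..<e t}"
      using g_lower[OF that] e_less[OF that] by auto
    finally show ?thesis .
  qed
  have f_surj: "f \<in> surjections {..<k} {..<m}"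
  proof -
    have "t \<in> f ` {..<k}" if "t < m" for t
      using f_\<sigma>[OF e_less[OF that]] g_e[OF that] e_less[OF that] permutes_in_image[OF \<sigma>]
      by (intro rev_image_eqI[of "\<sigma> (e t)"]) auto
    then show ?thesis
      using g_less unfolding surjections_def by (auto simp: f_def)
  qed
  define y where "y = shift x (\<sigma> ` {..<e 0})"
  have "shift y (lower f t) = shift x (\<sigma> ` {..<e t})" if "t < m" for t
  proof -
    have "e 0 \<le> e t" using e_mono[of 0 t] that by (cases t) auto
    then have split: "\<sigma> ` {..<e t} = \<sigma> ` {..<e 0} \<union> \<sigma> ` {e 0..<e t}"
      unfolding image_Un[symmetric] by (intro arg_cong[where f = "image \<sigma>"]) auto
    have disjoint: "\<sigma> ` {..<e 0} \<inter> \<sigma> ` {e 0..<e t} = {}"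
      by (simp flip: image_Int[OF permutes_inj[OF \<sigma>]]) auto
    have "\<sigma> ` {..<e t} \<subseteq> {..<k}"
      using image_lessThan_psubset_if_permutes[OF \<sigma> e_less[OF that]] by blast
    then have "shift x (\<sigma> ` {..<e t}) = shift y (\<sigma> ` {e 0..<e t})"
      using disjoint unfolding y_def split by (intro shift_Un) auto
    then show ?thesis
      unfolding lower_f[OF that] by simp
  qed
  then have "face y f = (\<lambda>i. shift x (\<sigma> ` {..<i})) ` e ` {..<m}"
    unfolding face_def image_image by (intro image_cong) auto
  then have "face y f = (\<lambda>i. shift x (\<sigma> ` {..<i})) ` I"
    by (simp only: e_image)
  moreover have "y < n" by (simp add: y_def shift_less)
  ultimately show ?thesis using that f_surj by blast
qed

lemma face_exists:
  assumes "S \<in> tonnetz n L" and "card S = m"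
  obtains y f where "y < n" "f \<in> surjections {..<k} {..<m}" "face y f = S"
proof -
  obtain x \<sigma> where \<sigma>: "\<sigma> permutes {..<k}" and "S \<subseteq> tonnetz_max_simplex n L x \<sigma>"
    using assms(1) length_L unfolding tonnetz_def by blast
  define p where "p i = shift x (\<sigma> ` {..<i})" for i
  have S_sub: "S \<subseteq> p ` {..<k}"
    using \<open>S \<subseteq> _\<close> by (simp add: tonnetz_max_simplex_eq[OF \<sigma>] p_def)
  have "inj_on p {..<k}"
  proof (rule inj_onI)
    fix i j assume "i \<in> {..<k}" "j \<in> {..<k}" "p i = p j"
    then have "\<sigma> ` {..<i} \<subset> {..<k}" "\<sigma> ` {..<j} \<subset> {..<k}"
      using image_lessThan_psubset_if_permutes[OF \<sigma>] by simp_all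
    moreover have "shift x (\<sigma> ` {..<i}) = shift x (\<sigma> ` {..<j})"
      using \<open>p i = p j\<close> unfolding p_def .
    ultimately have "\<sigma> ` {..<i} = \<sigma> ` {..<j}"
      by (intro inj_onD[OF inj_on_shift]) simp_all
    then have "card (\<sigma> ` {..<i}) = card (\<sigma> ` {..<j})" by simp
    then show "i = j"
      by (simp add: card_image permutes_inj_on[OF \<sigma>])
  qed
  define I where "I = {i. i < k \<and> p i \<in> S}"
  have "S = p ` I"
    using S_sub unfolding I_def by auto
  have "I \<subseteq> {..<k}"
    unfolding I_def by blast
  then have "card I = m"
    using \<open>card S = m\<close> \<open>S = p ` I\<close> card_image[OF inj_on_subset[OF \<open>inj_on p {..<k}\<close>]] by simp
  obtain y f where "y < n" "f \<in> surjections {..<k} {..<m}" "face y f = p ` I"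
    using face_of_initial_segments[OF \<sigma> \<open>I \<subseteq> {..<k}\<close> \<open>card I = m\<close>, of x]
    unfolding p_def by blast
  then show ?thesis
    using that \<open>S = p ` I\<close> by simp
qed

lemma card_face_fibre:
  assumes f: "f \<in> surjections {..<k} {..<m}" and "y < n"
  shows "card {p \<in> {..<n} \<times> surjections {..<k} {..<m}. face (fst p) (snd p) = face y f} = m"
    (is "card ?F = m")
proof -
  have "bij_betw fst ?F (face y f)"
  proof (rule bij_betw_imageI)
    show "inj_on fst ?F"
    proof (rule inj_onI)
      fix p q assume "p \<in> ?F" "q \<in> ?F" and fst_eq: "fst p = fst q"
      then have "snd p \<in> surjections {..<k} {..<m}" "snd q \<in> surjections {..<k} {..<m}"
        and "face (fst p) (snd p) = face (fst p) (snd q)"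
        by (auto simp: mem_Times_iff)
      then have "snd p = snd q" by (rule face_inj)
      with fst_eq show "p = q" by (simp add: prod_eq_iff)
    qed
    show "fst ` ?F = face y f"
    proof (intro equalityI subsetI)
      fix z assume "z \<in> fst ` ?F"
      then obtain f' where "z < n" "f' \<in> surjections {..<k} {..<m}" "face z f' = face y f"
        by auto
      then show "z \<in> face y f" using mem_face by metis
    next
      fix z assume "z \<in> face y f"
      then obtain t0 where "t0 < m" and z: "z = shift y (lower f t0)"
        unfolding face_def by blast
      obtain f' where "f' \<in> surjections {..<k} {..<m}" "face z f' = face y f"
        using face_rebase[OF f \<open>t0 < m\<close>] unfolding z by blast
      moreover have "z < n" using z shift_less by simp
      ultimately have "(z, f') \<in> ?F" by simp
      then show "z \<in> fst ` ?F" by (rule rev_image_eqI) simp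
    qed
  qed
  then show ?thesis
    using card_face[OF f] by (simp add: bij_betw_same_card)
qed

theorem card_faces:
  "m * card {S \<in> tonnetz n L. card S = m} = n * card (surjections {..<k} {..<m})"
proof -
  let ?D = "{..<n} \<times> surjections {..<k} {..<m}"
  let ?face = "\<lambda>p. face (fst p) (snd p)"
  have "?face ` ?D = {S \<in> tonnetz n L. card S = m}"
  proof (intro equalityI subsetI)
    fix S assume "S \<in> ?face ` ?D"
    then obtain y f where "y < n" "f \<in> surjections {..<k} {..<m}" "S = face y f"
      by auto
    then show "S \<in> {S \<in> tonnetz n L. card S = m}"
      using face_in_tonnetz card_face by simp
  next
    fix S assume "S \<in> {S \<in> tonnetz n L. card S = m}"
    then obtain y f where "y < n" "f \<in> surjections {..<k} {..<m}" "face y f = S"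
      using face_exists by blast
    then show "S \<in> ?face ` ?D"
      by (intro rev_image_eqI[of "(y, f)"]) simp_all
  qed
  moreover have "card ?D = m * card (?face ` ?D)"
  proof (rule card_eq_mult_card_image)
    show "finite ?D" by (simp add: finite_surjections)
    show "card {q \<in> ?D. ?face q = ?face p} = m" if "p \<in> ?D" for p
      using card_face_fibre that by (auto simp: mem_Times_iff)
  qed
  ultimately show ?thesis
    by (simp add: card_cartesian_product)
qed

end

theorem proposition2p5:
  fixes L :: "nat list" and k n m :: nat
  assumes "k \<ge> 2" and "length L = k" and "\<forall>l \<in> set L. l > 0"
    and "sum_list L = n" and "generic L" and "reduced L"
    and "1 \<le> m" and "m \<le> k"
  shows "real (fvec (tonnetz n L) (m - 1)) = real n * real (ordered_partitions k m) / real m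
       \<and> real n * real (ordered_partitions k m) / real m
           = real n * real (fact m) / real m * real (Stirling k m)"
proof -
  interpret generic_tonnetz L k n m
    using assms by unfold_locales auto
  have "fvec (tonnetz n L) (m - 1) = card {S \<in> tonnetz n L. card S = m}"
    using \<open>1 \<le> m\<close> by (simp add: fvec_def)
  moreover have "ordered_partitions k m = card (surjections {..<k} {..<m})"
    by (simp add: ordered_partitions_eq_Stirling card_surjections)
  ultimately have "real m * real (fvec (tonnetz n L) (m - 1)) = real n * real (ordered_partitions k m)"
    using card_faces by (metis of_nat_mult)
  then show ?thesis
    using \<open>1 \<le> m\<close> by (simp add: ordered_partitions_eq_Stirling field_simps)
qed

end
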